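(* Let $\Delta$ be a finite saturated sample set and $\delta$ a $\Delta$-diagram. For every basic term $t$ and every homomorphism $h$ from the term algebra to $\mathbf{W}$, if $h(x)$ strongly extends $D_x(\delta)$ for each variable $x$ occurring in $t$, then $[\![t]\!]_h$ strongly extends $D_t(\delta)$.
   Context: Time warps: join-preserving maps $f\colon\omega^+\to\omega^+$, $\omega^+=\omega\cup\{\omega\}$, ordered pointwise; $p(m)=\bigvee\{k\in\omega\mid k<m\}$; $\mathbf{W}=\langle W,\wedge,\vee,\circ,{}^\star,\mathrm{id}\rangle$ with pointwise meet/join, composition, identity and $f^\star$ the largest time warp $h$ with $f\circ h\le p$; $\mathrm{last}(f)=\min\{m\in\omega^+\mid f(m)=f(\omega)\}$. Terms use $\wedge,\vee,\cdot,{}',1$ (interpreted as $\wedge,\vee,\circ,{}^\star,\mathrm{id}$); basic terms use only variables, $\cdot,{}',1$; $[\![t]\!]_h$ is the value of $t$ under $h$. Samples (formal expressions): $\alpha::=\kappa\mid t[\alpha]\mid \mathrm{suc}(\alpha)\mid\mathrm{last}(t)$ with $\kappa$ a time variable and $t$ a basic term. The relation $\leadsto$: $t[\alpha]\leadsto\alpha$, $\mathrm{suc}(\alpha)\leadsto\alpha$, $t[\alpha]\leadsto t[\mathrm{last}(t)]$, $(tu)[\alpha]\leadsto t[u[\alpha]]$, $t'[\alpha]\leadsto t[t'[\alpha]]$, $t'[\alpha]\leadsto t[\mathrm{suc}(t'[\alpha])]$; a sample set is saturated if closed under $\leadsto$. $S(n)=n+1$ for $n\in\omega$, $S(\omega)=\omega$.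 For saturated $\Delta$, a $\Delta$-diagram is $\delta\colon\Delta\to\omega^+$ such that, whenever the samples mentioned belong to $\Delta$: (1) $\delta(\alpha)\le\delta(\beta)\Rightarrow\delta(t[\alpha])\le\delta(t[\beta])$; (2) $\delta(\alpha)=0\Rightarrow\delta(t[\alpha])=0$; (3) $\delta(\mathrm{suc}(\alpha))=S(\delta(\alpha))$; (4) for $t[\alpha]\in\Delta$: $\delta(\mathrm{last}(t))\le\delta(\alpha)\iff\delta(t[\mathrm{last}(t)])=\delta(t[\alpha])$; (5) $\delta(\mathrm{last}(t))=\omega\Rightarrow\delta(t[\mathrm{last}(t)])=\omega$; (6) $\delta(1[\alpha])=\delta(\alpha)$; (7) $\delta(\mathrm{last}(1))=\omega$; (8) $\delta((tu)[\alpha])=\delta(t[u[\alpha]])$; (9) $\delta(\mathrm{last}(tu))=\omega\Rightarrow\delta(\mathrm{last}(t))=\delta(\mathrm{last}(u))=\omega$; (10) for $t'[\alpha]\in\Delta$: $0<\delta(\alpha)<\omega\Rightarrow\delta(t[t'[\alpha]])<\delta(\alpha)$; (11) for $t'[\alpha]\in\Delta$: $\delta(t'[\alpha])<\omega\Rightarrow\delta(\alpha)\le\delta(t[\mathrm{suc}(t'[\alpha])])$; (12) $\delta(\mathrm{last}(t'))=\omega\Rightarrow\delta(\mathrm{last}(t))=\omega$. For a basic term $t$, $D_t(\delta)=\{(\delta(\alpha),\delta(t[\alpha]))\mid t[\alpha]\in\Delta\}$. A time warp $f$ extends $D_t(\delta)$ if $f(i)=j$ for all $(i,j)\in D_t(\delta)$,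 and strongly extends it if moreover $D_t(\delta)\neq\emptyset$ and $\delta(\mathrm{last}(t))=\omega$ together imply $\mathrm{last}(f)=\omega$. *)

theory Defs
  imports Main "HOL-Library.Extended_Nat"
begin

text \<open>omega^+ is rendered as enat (infinity = omega).\<close>

type_synonym warp = "enat \<Rightarrow> enat"

definition time_warp :: "warp \<Rightarrow> bool" where
  "time_warp f \<longleftrightarrow> (\<forall>S. f (Sup S) = Sup (f ` S))"

definition pw :: "enat \<Rightarrow> enat" where
  "pw m = Sup {enat k | k. enat k < m}"

definition wstar :: "warp \<Rightarrow> warp" where
  "wstar f = (GREATEST h. time_warp h \<and> f \<circ> h \<le> pw)"

definition wlast :: "warp \<Rightarrow> enat" where
  "wlast f = (LEAST m. f m = f \<infinity>)"

datatype trm = Var nat | Meet trm trm | Join trm trm | Cmp trm trm | Star trm | One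

fun basic :: "trm \<Rightarrow> bool" where
  "basic (Var x) = True"
| "basic (Meet t u) = False"
| "basic (Join t u) = False"
| "basic (Cmp t u) = (basic t \<and> basic u)"
| "basic (Star t) = basic t"
| "basic One = True"

fun vars :: "trm \<Rightarrow> nat set" where
  "vars (Var x) = {x}"
| "vars (Meet t u) = vars t \<union> vars u"
| "vars (Join t u) = vars t \<union> vars u"
| "vars (Cmp t u) = vars t \<union> vars u"
| "vars (Star t) = vars t"
| "vars One = {}"

fun eval :: "(nat \<Rightarrow> warp) \<Rightarrow> trm \<Rightarrow> warp" where
  "eval h (Var x) = h x"
| "eval h (Meet t u) = inf (eval h t) (eval h u)"
| "eval h (Join t u) = sup (eval h t) (eval h u)"
| "eval h (Cmp t u) = eval h t \<circ> eval h u"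
| "eval h (Star t) = wstar (eval h t)"
| "eval h One = id"

datatype sample = TV nat | App trm sample | Sc sample | Lst trm

fun basic_sample :: "sample \<Rightarrow> bool" where
  "basic_sample (TV k) = True"
| "basic_sample (App t a) = (basic t \<and> basic_sample a)"
| "basic_sample (Sc a) = basic_sample a"
| "basic_sample (Lst t) = basic t"

inductive leadsto :: "sample \<Rightarrow> sample \<Rightarrow> bool" where
  "leadsto (App t a) a"
| "leadsto (Sc a) a"
| "leadsto (App t a) (App t (Lst t))"
| "leadsto (App (Cmp t u) a) (App t (App u a))"
| "leadsto (App (Star t) a) (App t (App (Star t) a))"
| "leadsto (App (Star t) a) (App t (Sc (App (Star t) a)))"

definition saturated :: "sample set \<Rightarrow> bool" where
  "saturated D \<longleftrightarrow> (\<forall>a\<in>D. \<forall>b. leadsto a b \<longrightarrow> b \<in> D)"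

text \<open>S(n) = n+1, S(omega) = omega is exactly eSuc.\<close>
definition diagram :: "sample set \<Rightarrow> (sample \<Rightarrow> enat) \<Rightarrow> bool" where
  "diagram D d \<longleftrightarrow>
    (\<forall>t a b. a \<in> D \<and> b \<in> D \<and> App t a \<in> D \<and> App t b \<in> D \<and> d a \<le> d b
        \<longrightarrow> d (App t a) \<le> d (App t b)) \<and>
    (\<forall>t a. a \<in> D \<and> App t a \<in> D \<and> d a = 0 \<longrightarrow> d (App t a) = 0) \<and>
    (\<forall>a. a \<in> D \<and> Sc a \<in> D \<longrightarrow> d (Sc a) = eSuc (d a)) \<and>
    (\<forall>t a. App t a \<in> D \<and> a \<in> D \<and> Lst t \<in> D \<and> App t (Lst t) \<in> D \<longrightarrow>
        (d (Lst t) \<le> d a \<longleftrightarrow> d (App t (Lst t)) = d (App t a))) \<and>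
    (\<forall>t. Lst t \<in> D \<and> App t (Lst t) \<in> D \<and> d (Lst t) = \<infinity> \<longrightarrow> d (App t (Lst t)) = \<infinity>) \<and>
    (\<forall>a. a \<in> D \<and> App One a \<in> D \<longrightarrow> d (App One a) = d a) \<and>
    (Lst One \<in> D \<longrightarrow> d (Lst One) = \<infinity>) \<and>
    (\<forall>t u a. App (Cmp t u) a \<in> D \<and> App t (App u a) \<in> D \<longrightarrow>
        d (App (Cmp t u) a) = d (App t (App u a))) \<and>
    (\<forall>t u. Lst (Cmp t u) \<in> D \<and> Lst t \<in> D \<and> Lst u \<in> D \<and> d (Lst (Cmp t u)) = \<infinity> \<longrightarrow>
        d (Lst t) = \<infinity> \<and> d (Lst u) = \<infinity>) \<and>
    (\<forall>t a. App (Star t) a \<in> D \<and> a \<in> D \<and> App t (App (Star t) a) \<in> D \<and> 0 < d a \<and> d a < \<infinity>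
        \<longrightarrow> d (App t (App (Star t) a)) < d a) \<and>
    (\<forall>t a. App (Star t) a \<in> D \<and> a \<in> D \<and> App t (Sc (App (Star t) a)) \<in> D \<and>
        d (App (Star t) a) < \<infinity> \<longrightarrow> d a \<le> d (App t (Sc (App (Star t) a)))) \<and>
    (\<forall>t. Lst (Star t) \<in> D \<and> Lst t \<in> D \<and> d (Lst (Star t)) = \<infinity> \<longrightarrow> d (Lst t) = \<infinity>)"

definition Dt :: "sample set \<Rightarrow> (sample \<Rightarrow> enat) \<Rightarrow> trm \<Rightarrow> (enat \<times> enat) set" where
  "Dt D d t = {(d a, d (App t a)) | a. App t a \<in> D}"

definition extends :: "warp \<Rightarrow> (enat \<times> enat) set \<Rightarrow> bool" where
  "extends f R \<longleftrightarrow> (\<forall>(i, j) \<in> R. f i = j)"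

definition strongly_extends :: "sample set \<Rightarrow> (sample \<Rightarrow> enat) \<Rightarrow> trm \<Rightarrow> warp \<Rightarrow> bool" where
  "strongly_extends D d t f \<longleftrightarrow> extends f (Dt D d t) \<and>
     (Dt D d t \<noteq> {} \<and> d (Lst t) = \<infinity> \<longrightarrow> wlast f = \<infinity>)"

end

theory Submission
  imports Defs
begin

(* Identity and composition are read off from
   clauses (6), (8) and (9) of a diagram. For t' with f = [[t]]\<^sub>h, the warp f\<^sup>\<star> is computed
   explicitly: f\<^sup>\<star>(n) is the supremum over k < n of the largest m with f(m) \<le> k. Whenever d(a)
   is finite, clauses (10) and (11) squeeze d(t'[a]) from both sides against f\<^sup>\<star>(d(a)).
   For d(a) = \<omega>, clause (4) replaces a by last(t'); if d(last(t')) = \<omega> as well, clause (12)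
   and the hypothesis on t give last(f) = \<omega>, which forces f\<^sup>\<star>(\<omega>) = \<omega>. *)

lemma time_warp_sup: "time_warp f \<Longrightarrow> f (sup a b) = sup (f a) (f b)"
  unfolding time_warp_def by (metis Sup_insert ccSup_empty image_empty image_insert sup_bot.right_neutral)

lemma time_warp_mono: "time_warp f \<Longrightarrow> a \<le> b \<Longrightarrow> f a \<le> f b"
  by (metis sup.absorb_iff2 time_warp_sup)

lemma Sup_range_enat: "Sup (range enat) = \<infinity>"
  by (metis Sup_eq_top_iff enat_ord_simps(2) gt_ex less_infinityE range_eqI top_enat_def)

lemma time_warp_infinity: "time_warp f \<Longrightarrow> f \<infinity> = (SUP n. f (enat n))"
  unfolding time_warp_def by (metis Sup_range_enat image_image)

lemma time_warp_comp: "time_warp f \<Longrightarrow> time_warp g \<Longrightarrow> time_warp (f \<circ> g)"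
  unfolding time_warp_def by (simp add: image_comp)

lemma time_warp_id: "time_warp id"
  unfolding time_warp_def by simp

lemma enat_eq_SUP_Suc_below: "n = (SUP k\<in>{k. enat k < n}. enat (Suc k))"
proof (rule order.antisym)
  show "(SUP k\<in>{k. enat k < n}. enat (Suc k)) \<le> n"
    by (rule SUP_least) (simp add: Suc_ile_eq)
  show "n \<le> (SUP k\<in>{k. enat k < n}. enat (Suc k))"
  proof (cases n)
    case (enat m)
    show ?thesis
    proof (cases m)
      case 0
      with enat show ?thesis by (simp add: zero_enat_def [symmetric])
    next
      case (Suc j)
      with enat show ?thesis by (auto intro: SUP_upper2 [of j])
    qed
  next
    case infinity
    have "\<infinity> = (SUP k. enat k)" by (simp add: Sup_range_enat)
    also have "\<dots> \<le> (SUP k. enat (Suc k))" by (rule SUP_mono') simp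
    finally show ?thesis using infinity by simp
  qed
qed

lemma wlast_eq_infinity_iff:
  assumes "time_warp f"
  shows "wlast f = \<infinity> \<longleftrightarrow> f \<infinity> = \<infinity> \<and> (\<forall>n. f (enat n) \<noteq> \<infinity>)"
proof
  assume "wlast f = \<infinity>"
  then have never: "f (enat n) \<noteq> f \<infinity>" for n
    unfolding wlast_def using Least_le[of "\<lambda>m. f m = f \<infinity>" "enat n"] by auto
  have "f \<infinity> = \<infinity>"
  proof (rule ccontr)
    assume "f \<infinity> \<noteq> \<infinity>"
    then obtain c where c: "f \<infinity> = enat c" by auto
    have "eSuc (f (enat n)) \<le> f \<infinity>" for n
      using never[of n] time_warp_mono[OF assms, of "enat n" \<infinity>] by (simp add: ileI1 order_less_le)
    then have "eSuc (f \<infinity>) \<le> f \<infinity>"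
      by (simp add: time_warp_infinity[OF assms] eSuc_Sup image_image SUP_least)
    with c show False by (simp add: eSuc_enat)
  qed
  with never show "f \<infinity> = \<infinity> \<and> (\<forall>n. f (enat n) \<noteq> \<infinity>)" by simp
next
  assume finite_below: "f \<infinity> = \<infinity> \<and> (\<forall>n. f (enat n) \<noteq> \<infinity>)"
  show "wlast f = \<infinity>"
    unfolding wlast_def
  proof (rule Least_equality)
    fix m
    assume "f m = f \<infinity>"
    with finite_below show "\<infinity> \<le> m" by (cases m) (auto simp del: not_infinity_eq)
  qed simp
qed

definition resid :: "warp \<Rightarrow> nat \<Rightarrow> enat" where
  "resid f k = Sup {m. f m \<le> enat k}"

definition star_warp :: "warp \<Rightarrow> warp" where
  "star_warp f n = (SUP k\<in>{k. enat k < n}. resid f k)"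

lemma resid_apply_le: "time_warp f \<Longrightarrow> f (resid f k) \<le> enat k"
  unfolding resid_def time_warp_def by (auto intro: SUP_least)

lemma time_warp_star_warp: "time_warp (star_warp f)"
  unfolding time_warp_def
proof
  fix S :: "enat set"
  have "{k. enat k < Sup S} = (\<Union>s\<in>S. {k. enat k < s})"
    by (auto simp: less_Sup_iff)
  then show "star_warp f (Sup S) = Sup (star_warp f ` S)"
    unfolding star_warp_def by (simp only: SUP_UNION)
qed

lemma star_warp_below_pw:
  assumes "time_warp f"
  shows "f (star_warp f n) \<le> pw n"
proof -
  have "f (resid f k) \<le> pw n" if "enat k < n" for k
    using resid_apply_le[OF assms, of k] that unfolding pw_def
    by (blast intro: order.trans Sup_upper)
  then show ?thesis
    using assms unfolding star_warp_def time_warp_def by (auto simp: image_image intro!: SUP_least)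
qed

lemma star_warp_greatest:
  assumes h: "time_warp h" and below: "f \<circ> h \<le> pw"
  shows "h \<le> star_warp f"
proof (rule le_funI)
  fix n
  have "h (enat (Suc k)) \<le> resid f k" for k
  proof -
    have "pw (enat (Suc k)) \<le> enat k"
      unfolding pw_def by (rule Sup_least) auto
    with below have "f (h (enat (Suc k))) \<le> enat k"
      by (metis comp_apply le_funD order.trans)
    then show ?thesis unfolding resid_def by (simp add: Sup_upper)
  qed
  then have "(SUP k\<in>{k. enat k < n}. h (enat (Suc k))) \<le> star_warp f n"
    unfolding star_warp_def by (rule SUP_mono')
  moreover have "h n = (SUP k\<in>{k. enat k < n}. h (enat (Suc k)))"
    using h unfolding time_warp_def by (metis enat_eq_SUP_Suc_below image_image)
  ultimately show "h n \<le> star_warp f n" by simp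
qed

lemma wstar_eq_star_warp: "time_warp f \<Longrightarrow> wstar f = star_warp f"
  unfolding wstar_def
  by (rule Greatest_equality) (auto simp: time_warp_star_warp star_warp_below_pw le_funI star_warp_greatest)

lemma time_warp_eval: "basic t \<Longrightarrow> \<forall>x. time_warp (h x) \<Longrightarrow> time_warp (eval h t)"
  by (induction t) (auto simp: time_warp_comp time_warp_id wstar_eq_star_warp time_warp_star_warp)

lemma le_star_warpI: "f s < n \<Longrightarrow> s \<le> star_warp f n"
proof -
  assume "f s < n"
  then obtain k where k: "f s = enat k" "enat k < n"
    by (cases "f s") auto
  then have "s \<le> resid f k" unfolding resid_def by (simp add: Sup_upper)
  also have "\<dots> \<le> star_warp f n" unfolding star_warp_def using k(2) by (simp add: SUP_upper)
  finally show ?thesis .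
qed

lemma star_warp_leI:
  assumes f: "time_warp f" and "n \<le> f (eSuc s)"
  shows "star_warp f n \<le> s"
  unfolding star_warp_def resid_def
proof (intro SUP_least Sup_least)
  fix k m assume "k \<in> {k. enat k < n}" "m \<in> {m. f m \<le> enat k}"
  then have "f m < f (eSuc s)" using assms(2) by auto
  show "m \<le> s"
  proof (rule ccontr)
    assume "\<not> m \<le> s"
    then have "f (eSuc s) \<le> f m" by (simp add: time_warp_mono[OF f] ileI1)
    with \<open>f m < f (eSuc s)\<close> show False by simp
  qed
qed

lemma star_warp_infinity:
  assumes f: "time_warp f" and "wlast f = \<infinity>"
  shows "star_warp f \<infinity> = \<infinity>"
proof -
  have "enat j \<le> star_warp f \<infinity>" for j
  proof -
    obtain v where "f (enat j) = enat v"
      using assms wlast_eq_infinity_iff by auto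
    then have "enat j \<le> star_warp f (enat (Suc v))" by (intro le_star_warpI) simp
    also have "\<dots> \<le> star_warp f \<infinity>" by (simp add: time_warp_mono[OF time_warp_star_warp])
    finally show ?thesis .
  qed
  then have "Sup (range enat) \<le> star_warp f \<infinity>" by (auto intro: Sup_least)
  then show ?thesis by (simp add: Sup_range_enat)
qed

lemma wlast_star_warp:
  assumes f: "time_warp f" and "wlast f = \<infinity>"
  shows "wlast (star_warp f) = \<infinity>"
proof -
  have "star_warp f (enat n) \<noteq> \<infinity>" for n
  proof -
    have "enat n < f \<infinity>" using assms wlast_eq_infinity_iff by auto
    then obtain N where "enat n < f (enat N)"
      by (auto simp: time_warp_infinity[OF f] less_SUP_iff)
    also have "\<dots> \<le> f (eSuc (enat N))" by (simp add: time_warp_mono[OF f] ileI1)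
    finally have "star_warp f (enat n) \<le> enat N" by (intro star_warp_leI[OF f]) simp
    then show ?thesis by (metis infinity_ileE)
  qed
  then show ?thesis
    by (simp add: wlast_eq_infinity_iff time_warp_star_warp star_warp_infinity[OF assms])
qed

lemma wlast_comp:
  assumes f: "time_warp f" and g: "time_warp g"
    and "wlast f = \<infinity>" and "wlast g = \<infinity>"
  shows "wlast (f \<circ> g) = \<infinity>"
proof -
  have "f (g (enat n)) \<noteq> \<infinity>" for n
  proof -
    obtain m where "g (enat n) = enat m" using g assms(4) wlast_eq_infinity_iff by auto
    then show ?thesis using f assms(3) wlast_eq_infinity_iff by auto
  qed
  then show ?thesis
    using assms by (simp add: wlast_eq_infinity_iff time_warp_comp)
qed

lemma saturatedD: "saturated D \<Longrightarrow> a \<in> D \<Longrightarrow> leadsto a b \<Longrightarrow> b \<in> D"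
  unfolding saturated_def by blast

lemma saturated_App:
  assumes sat: "saturated D" and A: "App t a \<in> D"
  shows "a \<in> D" and "App t (Lst t) \<in> D" and "Lst t \<in> D"
proof -
  show "a \<in> D" "App t (Lst t) \<in> D"
    using saturatedD[OF sat A] leadsto.intros by blast+
  then show "Lst t \<in> D"
    using saturatedD[OF sat] leadsto.intros by blast
qed

lemma saturated_App_Cmp:
  "saturated D \<Longrightarrow> App (Cmp t u) a \<in> D \<Longrightarrow> App t (App u a) \<in> D"
  using saturatedD leadsto.intros by blast

lemma saturated_App_Star:
  assumes sat: "saturated D" and A: "App (Star t) a \<in> D"
  shows "App t (App (Star t) a) \<in> D" and "App t (Sc (App (Star t) a)) \<in> D"
    and "Sc (App (Star t) a) \<in> D"
proof -
  show "App t (App (Star t) a) \<in> D" "App t (Sc (App (Star t) a)) \<in> D"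
    using saturatedD[OF sat A] leadsto.intros by blast+
  then show "Sc (App (Star t) a) \<in> D"
    using saturatedD[OF sat] leadsto.intros by blast
qed

lemma diagram_App_zero:
  "diagram D d \<Longrightarrow> a \<in> D \<Longrightarrow> App t a \<in> D \<Longrightarrow> d a = 0 \<Longrightarrow> d (App t a) = 0"
  unfolding diagram_def by (elim conjE) metis

lemma diagram_Sc: "diagram D d \<Longrightarrow> a \<in> D \<Longrightarrow> Sc a \<in> D \<Longrightarrow> d (Sc a) = eSuc (d a)"
  unfolding diagram_def by (elim conjE) metis

lemma diagram_App_Lst:
  "diagram D d \<Longrightarrow> App t a \<in> D \<Longrightarrow> a \<in> D \<Longrightarrow> Lst t \<in> D \<Longrightarrow> App t (Lst t) \<in> D \<Longrightarrow>
    d (Lst t) \<le> d a \<longleftrightarrow> d (App t (Lst t)) = d (App t a)"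
  unfolding diagram_def by (elim conjE) metis

lemma diagram_App_One: "diagram D d \<Longrightarrow> a \<in> D \<Longrightarrow> App One a \<in> D \<Longrightarrow> d (App One a) = d a"
  unfolding diagram_def by (elim conjE) metis

lemma diagram_App_Cmp:
  "diagram D d \<Longrightarrow> App (Cmp t u) a \<in> D \<Longrightarrow> App t (App u a) \<in> D \<Longrightarrow>
    d (App (Cmp t u) a) = d (App t (App u a))"
  unfolding diagram_def by (elim conjE) metis

lemma diagram_Lst_Cmp:
  "diagram D d \<Longrightarrow> Lst (Cmp t u) \<in> D \<Longrightarrow> Lst t \<in> D \<Longrightarrow> Lst u \<in> D \<Longrightarrow>
    d (Lst (Cmp t u)) = \<infinity> \<Longrightarrow> d (Lst t) = \<infinity> \<and> d (Lst u) = \<infinity>"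
  unfolding diagram_def by (elim conjE) metis

lemma diagram_App_Star_less:
  "diagram D d \<Longrightarrow> App (Star t) a \<in> D \<Longrightarrow> a \<in> D \<Longrightarrow> App t (App (Star t) a) \<in> D \<Longrightarrow>
    0 < d a \<Longrightarrow> d a < \<infinity> \<Longrightarrow> d (App t (App (Star t) a)) < d a"
  unfolding diagram_def by (elim conjE) metis

lemma diagram_App_Star_Sc:
  "diagram D d \<Longrightarrow> App (Star t) a \<in> D \<Longrightarrow> a \<in> D \<Longrightarrow> App t (Sc (App (Star t) a)) \<in> D \<Longrightarrow>
    d (App (Star t) a) < \<infinity> \<Longrightarrow> d a \<le> d (App t (Sc (App (Star t) a)))"
  unfolding diagram_def by (elim conjE) metis

lemma diagram_Lst_Star:
  "diagram D d \<Longrightarrow> Lst (Star t) \<in> D \<Longrightarrow> Lst t \<in> D \<Longrightarrow> d (Lst (Star t)) = \<infinity> \<Longrightarrow> d (Lst t) = \<infinity>"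
  unfolding diagram_def by (elim conjE) metis

lemma strongly_extendsD:
  "strongly_extends D d t f \<Longrightarrow> App t a \<in> D \<Longrightarrow> f (d a) = d (App t a)"
  unfolding strongly_extends_def extends_def Dt_def by fastforce

lemma strongly_extends_wlastD:
  "strongly_extends D d t f \<Longrightarrow> App t a \<in> D \<Longrightarrow> d (Lst t) = \<infinity> \<Longrightarrow> wlast f = \<infinity>"
  unfolding strongly_extends_def Dt_def by blast

lemma strongly_extendsI:
  assumes "\<And>a. App t a \<in> D \<Longrightarrow> f (d a) = d (App t a)"
    and "\<And>a. App t a \<in> D \<Longrightarrow> d (Lst t) = \<infinity> \<Longrightarrow> wlast f = \<infinity>"
  shows "strongly_extends D d t f"
  using assms unfolding strongly_extends_def extends_def Dt_def by blast

lemma strongly_extends_One: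
  assumes sat: "saturated D" and dgm: "diagram D d"
  shows "strongly_extends D d One id"
proof (rule strongly_extendsI)
  fix a
  assume "App One a \<in> D"
  then show "id (d a) = d (App One a)"
    using diagram_App_One[OF dgm] saturated_App(1)[OF sat] by simp
next
  show "wlast id = \<infinity>"
    by (simp add: wlast_eq_infinity_iff time_warp_id)
qed

lemma strongly_extends_Cmp:
  assumes sat: "saturated D" and dgm: "diagram D d"
    and f: "time_warp f" and g: "time_warp g"
    and ext_t: "strongly_extends D d t f" and ext_u: "strongly_extends D d u g"
  shows "strongly_extends D d (Cmp t u) (f \<circ> g)"
proof (rule strongly_extendsI)
  fix a
  assume A: "App (Cmp t u) a \<in> D"
  then have B: "App t (App u a) \<in> D" by (rule saturated_App_Cmp[OF sat])
  then have C: "App u a \<in> D" by (rule saturated_App(1)[OF sat])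
  show "(f \<circ> g) (d a) = d (App (Cmp t u) a)"
    using strongly_extendsD[OF ext_u C] strongly_extendsD[OF ext_t B] diagram_App_Cmp[OF dgm A B]
    by simp
  assume "d (Lst (Cmp t u)) = \<infinity>"
  then have "d (Lst t) = \<infinity>" "d (Lst u) = \<infinity>"
    using diagram_Lst_Cmp[OF dgm] saturated_App(3)[OF sat] A B C by auto
  then show "wlast (f \<circ> g) = \<infinity>"
    using wlast_comp[OF f g] strongly_extends_wlastD[OF ext_t B] strongly_extends_wlastD[OF ext_u C]
    by simp
qed

context
  fixes D :: "sample set" and d :: "sample \<Rightarrow> enat" and t :: trm and f :: warp
  assumes sat: "saturated D" and dgm: "diagram D d"
    and f: "time_warp f" and ext: "strongly_extends D d t f"
begin

lemma star_warp_le_App_Star: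
  assumes A: "App (Star t) a \<in> D"
  shows "star_warp f (d a) \<le> d (App (Star t) a)"
proof (cases "d (App (Star t) a) = \<infinity>")
  case False
  have "d a \<le> d (App t (Sc (App (Star t) a)))"
    using diagram_App_Star_Sc[OF dgm A saturated_App(1)[OF sat A] saturated_App_Star(2)[OF sat A]] False
    by auto
  also have "\<dots> = f (eSuc (d (App (Star t) a)))"
    using strongly_extendsD[OF ext saturated_App_Star(2)[OF sat A]]
      diagram_Sc[OF dgm _ saturated_App_Star(3)[OF sat A]] A by simp
  finally show ?thesis by (rule star_warp_leI[OF f])
qed simp

lemma App_Star_le_star_warp:
  assumes A: "App (Star t) a \<in> D" and "d a \<noteq> \<infinity>"
  shows "d (App (Star t) a) \<le> star_warp f (d a)"
proof (cases "d a = 0")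
  case True
  then show ?thesis
    using diagram_App_zero[OF dgm saturated_App(1)[OF sat A] A] by simp
next
  case False
  have "f (d (App (Star t) a)) = d (App t (App (Star t) a))"
    by (rule strongly_extendsD[OF ext saturated_App_Star(1)[OF sat A]])
  also have "\<dots> < d a"
    using diagram_App_Star_less[OF dgm A saturated_App(1)[OF sat A] saturated_App_Star(1)[OF sat A]]
      False assms(2) by auto
  finally show ?thesis by (rule le_star_warpI)
qed

lemma strongly_extends_Star: "strongly_extends D d (Star t) (star_warp f)"
proof (rule strongly_extendsI)
  fix a
  assume A: "App (Star t) a \<in> D"
  have last_t: "wlast f = \<infinity>" if "d (Lst (Star t)) = \<infinity>"
    using diagram_Lst_Star[OF dgm saturated_App(3)[OF sat A] _ that]
      strongly_extends_wlastD[OF ext saturated_App_Star(1)[OF sat A]]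
      saturated_App(3)[OF sat saturated_App_Star(1)[OF sat A]] by simp
  then show "d (Lst (Star t)) = \<infinity> \<Longrightarrow> wlast (star_warp f) = \<infinity>"
    by (rule wlast_star_warp[OF f])
  show "star_warp f (d a) = d (App (Star t) a)"
  proof (cases "d a = \<infinity>")
    case False
    then show ?thesis
      by (intro order.antisym star_warp_le_App_Star[OF A] App_Star_le_star_warp[OF A])
  next
    case True
    let ?l = "Lst (Star t)"
    have L: "?l \<in> D" "App (Star t) ?l \<in> D" using saturated_App[OF sat A] by simp_all
    have "d (App (Star t) a) = d (App (Star t) ?l)"
      using diagram_App_Lst[OF dgm A saturated_App(1)[OF sat A] L] True by simp
    also have "\<dots> \<le> star_warp f \<infinity>"
    proof (cases "d ?l = \<infinity>")
      case True
      then show ?thesis using star_warp_infinity[OF f last_t] by simp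
    next
      case False
      then have "d (App (Star t) ?l) \<le> star_warp f (d ?l)"
        by (rule App_Star_le_star_warp[OF L(2)])
      also have "\<dots> \<le> star_warp f \<infinity>" by (simp add: time_warp_mono[OF time_warp_star_warp])
      finally show ?thesis .
    qed
    finally have "d (App (Star t) a) \<le> star_warp f (d a)"
      using True by simp
    with star_warp_le_App_Star[OF A] show ?thesis by (rule order.antisym)
  qed
qed

end

theorem lemma3p8:
  fixes D :: "sample set" and d :: "sample \<Rightarrow> enat" and t :: trm and h :: "nat \<Rightarrow> warp"
  assumes "finite D" and "\<forall>a\<in>D. basic_sample a" and "saturated D" and "diagram D d"
    and "basic t"
    and "\<forall>x. time_warp (h x)"
    and "\<forall>x\<in>vars t. strongly_extends D d (Var x) (h x)"
  shows "strongly_extends D d t (eval h t)"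
  using assms(5,7)
proof (induction t)
  case (Cmp t u)
  then have "strongly_extends D d (Cmp t u) (eval h t \<circ> eval h u)"
    by (intro strongly_extends_Cmp[OF assms(3,4)] time_warp_eval[OF _ assms(6)]) auto
  then show ?case by (simp only: eval.simps)
next
  case (Star t)
  then have "time_warp (eval h t)" by (simp add: time_warp_eval[OF _ assms(6)])
  with Star have "strongly_extends D d (Star t) (star_warp (eval h t))"
    by (intro strongly_extends_Star[OF assms(3,4)]) auto
  then show ?case by (simp add: wstar_eq_star_warp \<open>time_warp (eval h t)\<close>)
next
  case One
  show ?case by (simp only: eval.simps strongly_extends_One[OF assms(3,4)])
qed simp_all

end
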